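(* Let $U\subsetneq(0,\pi)$ be an open set. Then for every $\varepsilon>0$ there exists $M=M(\varepsilon)>0$ such that for any $A\in SL_2(\mathbb R)$ satisfying $\varphi_A(U)\subset U$ and $\|A\|>M$, we have $(t_A-\varepsilon,t_A+\varepsilon)\not\subset U$.
   Context: $\mathbb{RP}^1$ is identified with $[0,\pi)\cong\mathbb R/\pi\mathbb Z$ (angle $\theta$ corresponds to the line through $(\cos\theta,\sin\theta)$), and $\varphi_A$ is the induced action of $A$ on it. For $A\in SL_2(\mathbb R)$, $t_A\in[0,\pi)$ is defined by: $(\cos t_A,\sin t_A)^{\mathrm t}$ is a unit eigenvector of $A^*A$ for its eigenvalue $\|A\|^{-2}$. *)

theory Defs
  imports "HOL-Analysis.Analysis"
begin

text \<open>Unit vector representing the angle theta in RP^1 = [0,pi).\<close>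
definition dirvec :: "real \<Rightarrow> real^2" where
  "dirvec t = vector [cos t, sin t]"

definition opnorm :: "real^2^2 \<Rightarrow> real" where
  "opnorm A = onorm (\<lambda>x. A *v x)"

definition phiA :: "real^2^2 \<Rightarrow> real \<Rightarrow> real" where
  "phiA A \<theta> = (THE s. s \<in> {0..<pi} \<and> (\<exists>c. c \<noteq> 0 \<and> A *v dirvec \<theta> = c *\<^sub>R dirvec s))"

definition is_tA :: "real^2^2 \<Rightarrow> real \<Rightarrow> bool" where
  "is_tA A t \<longleftrightarrow> t \<in> {0..<pi} \<and>
     (transpose A ** A) *v dirvec t = (inverse (opnorm A ^ 2)) *\<^sub>R dirvec t"

end

theory Submission
  imports Defs
begin

(* Let sigma = opnorm A and v = dirvec t_A. Then e = sigma A v is a unit vector, and since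
   det A = 1 the matrix A maps the orthogonal direction rot90 v to sigma (rot90 e), so
   A (dirvec (t_A + s)) = (cos s / sigma) e + (sigma sin s) rot90 e. Choosing tan s suitably,
   this is parallel to any prescribed dirvec q with |<dirvec q, e>| >= a, and then
   |s| <= 1 / (a sigma^2). A unit vector cannot be almost orthogonal to both dirvec 0 and
   dirvec p, where p is a point of (0, pi) outside U; as 0 is outside U too, for large norm some
   angle outside U is the image of an angle within epsilon of t_A, which is impossible if that
   interval lies in U and phiA A maps U into U. *)

definition rot90 :: "real^2 \<Rightarrow> real^2" where
  "rot90 v = vector [- v$2, v$1]"

lemma vec2_eq_iff: "(v::'a^2) = w \<longleftrightarrow> v$1 = w$1 \<and> v$2 = w$2"
  by (simp add: vec_eq_iff forall_2)

lemma inner_vec2: "inner (v::real^2) w = v$1 * w$1 + v$2 * w$2"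
  by (simp add: inner_vec_def sum_2)

lemma rot90_scaleR: "rot90 (c *\<^sub>R v) = c *\<^sub>R rot90 v"
  by (simp add: rot90_def vec2_eq_iff)

lemma inner_rot90_rot90: "inner (rot90 v) (rot90 w) = inner v w"
  by (simp add: rot90_def inner_vec2 mult.commute)

lemma norm_rot90: "norm (rot90 v) = norm v"
  by (simp add: norm_eq_sqrt_inner inner_rot90_rot90)

lemma vec2_decomp_unit:
  assumes "norm e = 1"
  shows "w = inner w e *\<^sub>R e + inner w (rot90 e) *\<^sub>R rot90 e"
proof -
  have e: "e$1 * e$1 + e$2 * e$2 = 1" using assms by (simp add: norm_eq_1 inner_vec2)
  have "(inner w e *\<^sub>R e + inner w (rot90 e) *\<^sub>R rot90 e) $ i = w$i * (e$1 * e$1 + e$2 * e$2)"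
    if "i = 1 \<or> i = 2" for i
    using that by (auto simp: rot90_def inner_vec2 algebra_simps)
  then show ?thesis by (simp add: vec2_eq_iff e)
qed

lemma norm_dirvec: "norm (dirvec t) = 1"
  by (simp add: norm_eq_1 inner_vec2 dirvec_def)

lemma dirvec_add: "dirvec (t + s) = cos s *\<^sub>R dirvec t + sin s *\<^sub>R rot90 (dirvec t)"
  by (simp add: dirvec_def rot90_def vec2_eq_iff cos_add sin_add algebra_simps)

lemma inner_matrix_vector_mult:
  fixes A :: "real^'n^'m"
  shows "inner (A *v v) (A *v w) = inner v ((transpose A ** A) *v w)"
  by (metis dot_lmul_matrix matrix_vector_mul_assoc vector_transpose_matrix)

lemma matrix_rot90_eigenvector:
  fixes A :: "real^2^2"
  assumes "(transpose A ** A) *v v = k *\<^sub>R v"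
  shows "k *\<^sub>R (A *v rot90 v) = det A *\<^sub>R rot90 (A *v v)"
proof -
  define p where "p = A *v v"
  have "transpose A *v p = k *\<^sub>R v"
    using assms by (simp add: p_def matrix_vector_mul_assoc)
  then have kv1: "k * v$1 = A$1$1 * p$1 + A$2$1 * p$2"
        and kv2: "k * v$2 = A$1$2 * p$1 + A$2$2 * p$2"
    by (simp_all add: vec2_eq_iff matrix_vector_mult_def transpose_def sum_2)
  have p: "p$1 = A$1$1 * v$1 + A$1$2 * v$2" "p$2 = A$2$1 * v$1 + A$2$2 * v$2"
    by (simp_all add: p_def matrix_vector_mult_def sum_2)
  have "k * (A$1$2 * v$1 - A$1$1 * v$2) = A$1$2 * (k * v$1) - A$1$1 * (k * v$2)"
    by (simp add: algebra_simps)
  also have "\<dots> = - det A * p$2"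
    unfolding kv1 kv2 det_2 by (simp add: algebra_simps)
  finally have 1: "k * (A$1$2 * v$1 - A$1$1 * v$2) = - det A * p$2" .
  have "k * (A$2$2 * v$1 - A$2$1 * v$2) = A$2$2 * (k * v$1) - A$2$1 * (k * v$2)"
    by (simp add: algebra_simps)
  also have "\<dots> = det A * p$1"
    unfolding kv1 kv2 det_2 by (simp add: algebra_simps)
  finally have 2: "k * (A$2$2 * v$1 - A$2$1 * v$2) = det A * p$1" .
  have "A *v rot90 v = vector [A$1$2 * v$1 - A$1$1 * v$2, A$2$2 * v$1 - A$2$1 * v$2]"
    by (simp add: vec2_eq_iff rot90_def matrix_vector_mult_def sum_2)
  then show ?thesis
    using 1 2 by (simp add: vec2_eq_iff rot90_def p_def[symmetric])
qed

lemma dirvec_eq_scaleR_imp_eq: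
  assumes "s \<in> {0..<pi}" "s' \<in> {0..<pi}" "dirvec s = r *\<^sub>R dirvec s'"
  shows "s = s'"
proof -
  have "norm (dirvec s) = \<bar>r\<bar> * norm (dirvec s')" using assms(3) by simp
  then have "r = 1 \<or> r = -1" by (simp add: norm_dirvec abs_if split: if_splits)
  then show ?thesis
  proof
    assume "r = 1"
    then have "cos s = cos s'" using assms(3) by (simp add: dirvec_def vec2_eq_iff)
    then show ?thesis using assms(1,2) cos_inj_pi by auto
  next
    assume "r = -1"
    then have "sin s = - sin s'" using assms(3) by (simp add: dirvec_def vec2_eq_iff)
    moreover have "sin s \<ge> 0" "sin s' \<ge> 0" using assms(1,2) by (auto intro: sin_ge_zero)
    ultimately have "sin s = 0" "sin s' = 0" by linarith+
    then show ?thesis using assms(1,2) by (auto simp: sin_zero_pi_iff)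
  qed
qed

lemma phiA_eqI:
  assumes "q \<in> {0..<pi}" "c \<noteq> 0" "A *v dirvec \<theta> = c *\<^sub>R dirvec q"
  shows "phiA A \<theta> = q"
  unfolding phiA_def
proof (rule the_equality)
  show "q \<in> {0..<pi} \<and> (\<exists>c. c \<noteq> 0 \<and> A *v dirvec \<theta> = c *\<^sub>R dirvec q)"
    using assms by blast
next
  fix s assume "s \<in> {0..<pi} \<and> (\<exists>c. c \<noteq> 0 \<and> A *v dirvec \<theta> = c *\<^sub>R dirvec s)"
  then obtain c' where s: "s \<in> {0..<pi}" and c': "c' \<noteq> 0" "c' *\<^sub>R dirvec s = c *\<^sub>R dirvec q"
    using assms(3) by auto
  then have "dirvec s = (c / c') *\<^sub>R dirvec q"
    by (metis (no_types) divide_inverse_commute scaleR_scaleR scaleR_left_imp_eq scaleR_one right_inverse)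
  then show "s = q"
    using assms(1) s dirvec_eq_scaleR_imp_eq by blast
qed

lemma tA_singular_frame:
  fixes A :: "real^2^2"
  assumes "det A = 1" "is_tA A t" "opnorm A > 0"
  defines "e \<equiv> opnorm A *\<^sub>R (A *v dirvec t)"
  shows "norm e = 1"
    and "A *v dirvec (t + s) = (cos s / opnorm A) *\<^sub>R e + (sin s * opnorm A) *\<^sub>R rot90 e"
proof -
  define \<sigma> where "\<sigma> = opnorm A"
  have \<sigma>: "\<sigma> > 0" using assms(3) by (simp add: \<sigma>_def)
  have eig: "(transpose A ** A) *v dirvec t = inverse (\<sigma>^2) *\<^sub>R dirvec t"
    using assms(2) by (simp add: is_tA_def \<sigma>_def)
  have "inner e e = \<sigma>^2 * inner (dirvec t) ((transpose A ** A) *v dirvec t)"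
    by (simp add: e_def \<sigma>_def inner_matrix_vector_mult power2_eq_square)
  also have "\<dots> = 1"
    using \<sigma> by (simp add: eig norm_dirvec flip: power2_norm_eq_inner)
  finally show "norm e = 1" by (simp add: norm_eq_1)
  have "inverse (\<sigma>^2) *\<^sub>R (A *v rot90 (dirvec t)) = rot90 (A *v dirvec t)"
    using matrix_rot90_eigenvector[OF eig] assms(1) by simp
  then have "A *v rot90 (dirvec t) = \<sigma>^2 *\<^sub>R rot90 (A *v dirvec t)"
    using \<sigma> by (metis scaleR_scaleR right_inverse scaleR_one power_not_zero less_irrefl)
  moreover have "A *v dirvec (t + s) = cos s *\<^sub>R (A *v dirvec t) + sin s *\<^sub>R (A *v rot90 (dirvec t))"
    by (simp only: dirvec_add matrix_vector_right_distrib matrix_vector_mult_scaleR)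
  ultimately show "A *v dirvec (t + s) = (cos s / opnorm A) *\<^sub>R e + (sin s * opnorm A) *\<^sub>R rot90 e"
    using \<sigma> by (simp add: e_def \<sigma>_def[symmetric] rot90_scaleR power2_eq_square)
qed

lemma phiA_preimage_near_tA:
  fixes A :: "real^2^2"
  assumes "det A = 1" "is_tA A t" "opnorm A > 0" "q \<in> {0..<pi}"
  defines "e \<equiv> opnorm A *\<^sub>R (A *v dirvec t)"
  assumes "inner (dirvec q) e \<noteq> 0"
  shows "\<exists>s. \<bar>s\<bar> \<le> 1 / (\<bar>inner (dirvec q) e\<bar> * opnorm A^2) \<and> phiA A (t + s) = q"
proof -
  define \<sigma> where "\<sigma> = opnorm A"
  define \<alpha> where "\<alpha> = inner (dirvec q) e"
  define \<beta> where "\<beta> = inner (dirvec q) (rot90 e)"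
  define s where "s = arctan (\<beta> / (\<alpha> * \<sigma>^2))"
  have \<sigma>: "\<sigma> > 0" and \<alpha>: "\<alpha> \<noteq> 0" using assms(3,6) by (simp_all add: \<sigma>_def \<alpha>_def)
  note frame = tA_singular_frame[OF assms(1-3), folded e_def \<sigma>_def]
  have "\<bar>\<beta>\<bar> \<le> 1"
    using Cauchy_Schwarz_ineq2[of "dirvec q" "rot90 e"] by (simp add: \<beta>_def norm_dirvec norm_rot90 frame(1))
  then have "\<bar>\<beta>\<bar> / (\<bar>\<alpha>\<bar> * \<sigma>^2) \<le> 1 / (\<bar>\<alpha>\<bar> * \<sigma>^2)"
    using \<alpha> \<sigma> by (intro divide_right_mono) auto
  then have s_bound: "\<bar>s\<bar> \<le> 1 / (\<bar>\<alpha>\<bar> * \<sigma>^2)"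
    using abs_arctan_le[of "\<beta> / (\<alpha> * \<sigma>^2)"] by (simp add: s_def abs_mult)
  have "sin s / cos s = \<beta> / (\<alpha> * \<sigma>^2)"
    by (metis s_def tan_arctan tan_def)
  then have "sin s * \<sigma> = cos s / (\<sigma> * \<alpha>) * \<beta>"
    using \<alpha> \<sigma> cos_arctan_not_zero[of "\<beta> / (\<alpha> * \<sigma>^2)"] by (simp add: s_def field_simps power2_eq_square)
  then have "A *v dirvec (t + s) = (cos s / (\<sigma> * \<alpha>)) *\<^sub>R (\<alpha> *\<^sub>R e + \<beta> *\<^sub>R rot90 e)"
    using \<alpha> by (simp add: frame(2) scaleR_add_right)
  also have "\<alpha> *\<^sub>R e + \<beta> *\<^sub>R rot90 e = dirvec q"
    using vec2_decomp_unit[OF frame(1)] by (simp add: \<alpha>_def \<beta>_def)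
  finally have "A *v dirvec (t + s) = (cos s / (\<sigma> * \<alpha>)) *\<^sub>R dirvec q" .
  moreover have "cos s / (\<sigma> * \<alpha>) \<noteq> 0"
    using \<alpha> \<sigma> cos_arctan_not_zero by (simp add: s_def)
  ultimately have "phiA A (t + s) = q"
    using phiA_eqI[OF assms(4)] by blast
  then show ?thesis
    using s_bound by (auto simp: \<alpha>_def \<sigma>_def)
qed

lemma unit_vec2_inner_dirvec_lower_bound:
  fixes e :: "real^2"
  assumes "norm e = 1" "0 < p" "p < pi"
  shows "sin p / 4 \<le> \<bar>inner (dirvec 0) e\<bar> \<or> sin p / 4 \<le> \<bar>inner (dirvec p) e\<bar>"
proof (rule ccontr)
  assume "\<not> ?thesis"
  then have e1: "\<bar>e$1\<bar> < sin p / 4" and ep: "\<bar>cos p * e$1 + sin p * e$2\<bar> < sin p / 4"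
    by (auto simp: inner_vec2 dirvec_def)
  have sin_p: "0 < sin p" "sin p \<le> 1" using assms(2,3) by (auto intro: sin_gt_zero)
  have "\<bar>cos p * e$1\<bar> \<le> \<bar>e$1\<bar>"
    using abs_cos_le_one[of p] by (simp add: abs_mult mult_left_le_one_le)
  moreover have "\<bar>sin p * e$2\<bar> \<le> \<bar>cos p * e$1 + sin p * e$2\<bar> + \<bar>cos p * e$1\<bar>"
    by arith
  ultimately have "\<bar>sin p * e$2\<bar> < sin p * (1/2)"
    using e1 ep by linarith
  then have "\<bar>e$2\<bar> \<le> 1/2" using sin_p by (simp add: abs_mult)
  moreover have "\<bar>e$1\<bar> \<le> 1/4" using e1 sin_p by linarith
  ultimately have "(e$1)^2 + (e$2)^2 \<le> (1/4)^2 + (1/2)^2"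
    by (intro add_mono; subst abs_le_square_iff[symmetric]) auto
  moreover have "(e$1)^2 + (e$2)^2 = 1"
    using assms(1) by (simp add: norm_eq_1 inner_vec2 power2_eq_square)
  ultimately show False by (simp add: power2_eq_square)
qed

lemma phiA_preimage_of_0_or_p_near_tA:
  fixes A :: "real^2^2"
  assumes "det A = 1" "is_tA A t" "opnorm A > 0" "0 < p" "p < pi"
  shows "\<exists>q s. q \<in> {0, p} \<and> \<bar>s\<bar> \<le> 4 / (sin p * opnorm A^2) \<and> phiA A (t + s) = q"
proof -
  define a where "a = sin p / 4"
  define e where "e = opnorm A *\<^sub>R (A *v dirvec t)"
  have "a > 0" using assms(4,5) by (simp add: a_def sin_gt_zero)
  have "norm e = 1"
    using tA_singular_frame(1)[OF assms(1-3)] by (simp add: e_def)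
  then obtain q where q: "q \<in> {0, p}" "a \<le> \<bar>inner (dirvec q) e\<bar>"
    using unit_vec2_inner_dirvec_lower_bound[OF _ assms(4,5)] a_def by blast
  moreover have "q \<in> {0..<pi}" using q(1) assms(4,5) by auto
  moreover have "inner (dirvec q) e \<noteq> 0" using q(2) \<open>a > 0\<close> by auto
  ultimately obtain s where s: "\<bar>s\<bar> \<le> 1 / (\<bar>inner (dirvec q) e\<bar> * opnorm A^2)" "phiA A (t + s) = q"
    using phiA_preimage_near_tA[OF assms(1-3), folded e_def] by blast
  note s(1)
  also have "1 / (\<bar>inner (dirvec q) e\<bar> * opnorm A^2) \<le> 1 / (a * opnorm A^2)"
    using q(2) \<open>a > 0\<close> assms(3) by (intro divide_left_mono mult_right_mono) auto
  also have "\<dots> = 4 / (sin p * opnorm A^2)"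
    by (simp add: a_def)
  finally show ?thesis
    using q(1) s(2) by blast
qed

theorem lemma3p3:
  fixes U :: "real set"
  assumes "open U" and "U \<subseteq> {0<..<pi}" and "U \<noteq> {0<..<pi}"
  shows "\<forall>\<epsilon>>0. \<exists>M>0. \<forall>(A::real^2^2) t.
           det A = 1 \<and> phiA A ` U \<subseteq> U \<and> opnorm A > M \<and> is_tA A t
           \<longrightarrow> \<not> {t - \<epsilon><..<t + \<epsilon>} \<subseteq> U"
proof (intro allI impI)
  fix \<epsilon> :: real assume "\<epsilon> > 0"
  obtain p where "p \<in> {0<..<pi}" "p \<notin> U" using assms(2,3) by blast
  then have p: "0 < p" "p < pi" "p \<notin> U" "0 \<notin> U" using assms(2) by auto
  then have "sin p > 0" by (simp add: sin_gt_zero)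
  define M where "M = sqrt (4 / (sin p * \<epsilon>))"
  show "\<exists>M>0. \<forall>(A::real^2^2) t. det A = 1 \<and> phiA A ` U \<subseteq> U \<and> opnorm A > M \<and> is_tA A t
           \<longrightarrow> \<not> {t - \<epsilon><..<t + \<epsilon>} \<subseteq> U"
  proof (intro exI[of _ M] conjI allI impI notI)
    show "M > 0" using \<open>sin p > 0\<close> \<open>\<epsilon> > 0\<close> by (simp add: M_def)
    fix A :: "real^2^2" and t
    assume "det A = 1 \<and> phiA A ` U \<subseteq> U \<and> opnorm A > M \<and> is_tA A t"
      and near_t: "{t - \<epsilon><..<t + \<epsilon>} \<subseteq> U"
    then have A: "det A = 1" "phiA A ` U \<subseteq> U" "opnorm A > M" "is_tA A t" by auto
    then have "opnorm A > 0" using \<open>M > 0\<close> by linarith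
    then have "sqrt (4 / (sin p * \<epsilon>)) < sqrt ((opnorm A)^2)"
      using A(3) by (simp add: M_def)
    then have "4 / (sin p * opnorm A^2) < \<epsilon>"
      using \<open>sin p > 0\<close> \<open>\<epsilon> > 0\<close> \<open>opnorm A > 0\<close> by (simp only: real_sqrt_less_iff) (simp add: field_simps)
    moreover obtain q s where "q \<in> {0, p}" "\<bar>s\<bar> \<le> 4 / (sin p * opnorm A^2)" "phiA A (t + s) = q"
      using phiA_preimage_of_0_or_p_near_tA[OF A(1,4) \<open>opnorm A > 0\<close> p(1,2)] by blast
    ultimately have "t + s \<in> U" "phiA A (t + s) \<notin> U"
      using near_t p(3,4) by (force simp: abs_less_iff)+
    then show False using A(2) by blast
  qed
qed

end
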